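(* Consider the model, design and estimator described in the context. For any $r,\ell\ge0$, $i,i'\in U$ and $t,t'\in[T]$, \[{\rm Cov}\big(\widehat\Delta^r_{it},\widehat\Delta^r_{i't'}\big)\le\frac{4(1+\sigma^2)}{p^r_{it}\,p^r_{i't'}}.\]
   Context: Model. There are $N$ individuals forming the vertex set $U$ ($|U|=N$) of an undirected interference graph $G=(U,E)$, and $T$ rounds $[T]=\{1,\dots,T\}$. For $i\in U$ let $\mathcal N(i)=\{i\}\cup\{j\in U:(i,j)\in E\}$. A treatment matrix $W\in\{0,1\}^{N\times T}$ is drawn at the beginning, independently of all other randomness. Each individual $i$ has a state $S_{it}$ in a state space $\mathcal S$; conditionally on $W$ the states evolve as Markov chains with $S_{i,t+1}\sim P_{it}^{W_{\mathcal N(i),t}}(\cdot\mid S_{it})$. Observed outcomes are $Y_{it}=\mu_{it}(S_{it},W_{\mathcal N(i),t})+\epsilon_{it}$, where $\mu_{it}:\mathcal S\times\{0,1\}^{\mathcal N(i)}\to[0,1]$. Uncorrelated noise: there is a constant $\sigma$ such that, with $S=(S_{it})$, $\mathbb E[\epsilon_{it}\mid S,W]=0$ and $\mathbb E[\epsilon_{it}\epsilon_{i't'}\mid S,W]\le\sigma^2\mathbbm 1(i=i',t=t')$. A fixed parameter $\delta\in[0,1)$ is used in the exposure mapping. Design (clustered switchback): $\Pi$ is a partition of $U$ into clusters; $[T]$ is partitioned into consecutive time blocks of length $\ell$ (the last possibly shorter); for each cluster $C\in\Pi$ and block $B$, independently $A_{CB}\sim{\rm Ber}(1/2)$, and $W_{it}=A_{CB}$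 for $(i,t)\in C\times B$. Estimator: $X^r_{ita}(W)=\prod_{t'=t-r}^{t}\mathbbm 1\Big(\frac{\sum_{i'\in\mathcal N(i)}\mathbbm 1(W_{i't'}=a)}{|\mathcal N(i)|}\ge1-\delta\Big)$, $p^r_{ita}=\mathbb P[X^r_{ita}=1]$; since treatment and control are equally likely, $p^r_{it0}=p^r_{it1}$, and this common value is denoted $p^r_{it}$. $\widehat\Delta^r_{it}=\frac{X^r_{it1}}{p^r_{it1}}Y_{it}-\frac{X^r_{it0}}{p^r_{it0}}Y_{it}$. *)

theory Defs
  imports "HOL-Probability.Probability" "HOL-Library.Disjoint_Sets"
begin

definition nbhd :: "'a set \<Rightarrow> ('a \<Rightarrow> 'a \<Rightarrow> bool) \<Rightarrow> 'a \<Rightarrow> 'a set" where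
  "nbhd U E i = insert i {j \<in> U. E i j}"

definition gen_sigma :: "'w measure \<Rightarrow> 'b measure \<Rightarrow> ('k \<Rightarrow> 'w \<Rightarrow> 'b) \<Rightarrow> 'k set \<Rightarrow> 'w measure" where
  "gen_sigma M N X K = sigma (space M) {X k -` B \<inter> space M | k B. k \<in> K \<and> B \<in> sets N}"

definition block_of :: "nat \<Rightarrow> nat \<Rightarrow> nat" where
  "block_of l t = (t - 1) div l"

definition clustered_switchback ::
  "'w measure \<Rightarrow> 'a set \<Rightarrow> 'a set set \<Rightarrow> nat \<Rightarrow> nat \<Rightarrow> ('a \<Rightarrow> nat \<Rightarrow> 'w \<Rightarrow> bool) \<Rightarrow> bool" where
  "clustered_switchback M U Cl T l W \<longleftrightarrow>
     (\<exists>A :: 'a set \<Rightarrow> nat \<Rightarrow> 'w \<Rightarrow> bool.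
        prob_space.indep_vars M (\<lambda>_. count_space UNIV) (\<lambda>(C, b). A C b)
          (Cl \<times> block_of l ` {1..T})
      \<and> (\<forall>C\<in>Cl. \<forall>b\<in>block_of l ` {1..T}. measure M {\<omega> \<in> space M. A C b \<omega>} = 1/2)
      \<and> (\<forall>C\<in>Cl. \<forall>i\<in>C. \<forall>t\<in>{1..T}. \<forall>\<omega>\<in>space M. W i t \<omega> = A C (block_of l t) \<omega>))"

(* Treatment vector of the neighbourhood, W_{N(i),t} \<in> {0,1}^{N(i)} (set to False outside N(i)) *)
definition wN :: "'a set \<Rightarrow> ('a \<Rightarrow> 'a \<Rightarrow> bool) \<Rightarrow> ('a \<Rightarrow> nat \<Rightarrow> 'w \<Rightarrow> bool) \<Rightarrow> 'a \<Rightarrow> nat \<Rightarrow> 'w \<Rightarrow> 'a \<Rightarrow> bool" where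
  "wN U E W i t \<omega> = (\<lambda>j. if j \<in> nbhd U E i then W j t \<omega> else False)"

(* Exposure indicator X^r_{ita}(W); rounds t' < 1 (outside [T]) are omitted from the product *)
definition expo :: "'a set \<Rightarrow> ('a \<Rightarrow> 'a \<Rightarrow> bool) \<Rightarrow> real \<Rightarrow> ('a \<Rightarrow> nat \<Rightarrow> 'w \<Rightarrow> bool)
     \<Rightarrow> nat \<Rightarrow> 'a \<Rightarrow> nat \<Rightarrow> bool \<Rightarrow> 'w \<Rightarrow> real" where
  "expo U E \<delta> W r i t a \<omega> =
     (\<Prod>t'\<in>{t - r..t} \<inter> {1..}.
        of_bool (real (card {i' \<in> nbhd U E i. W i' t' \<omega> = a}) / real (card (nbhd U E i)) \<ge> 1 - \<delta>))"

definition pexpo :: "'w measure \<Rightarrow> 'a set \<Rightarrow> ('a \<Rightarrow> 'a \<Rightarrow> bool) \<Rightarrow> real \<Rightarrow> ('a \<Rightarrow> nat \<Rightarrow> 'w \<Rightarrow> bool)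
     \<Rightarrow> nat \<Rightarrow> 'a \<Rightarrow> nat \<Rightarrow> bool \<Rightarrow> real" where
  "pexpo M U E \<delta> W r i t a = measure M {\<omega> \<in> space M. expo U E \<delta> W r i t a \<omega> = 1}"

definition outcome :: "'a set \<Rightarrow> ('a \<Rightarrow> 'a \<Rightarrow> bool) \<Rightarrow> ('a \<Rightarrow> nat \<Rightarrow> 's \<Rightarrow> ('a \<Rightarrow> bool) \<Rightarrow> real)
     \<Rightarrow> ('a \<Rightarrow> nat \<Rightarrow> 'w \<Rightarrow> 's) \<Rightarrow> ('a \<Rightarrow> nat \<Rightarrow> 'w \<Rightarrow> bool) \<Rightarrow> ('a \<Rightarrow> nat \<Rightarrow> 'w \<Rightarrow> real)
     \<Rightarrow> 'a \<Rightarrow> nat \<Rightarrow> 'w \<Rightarrow> real" where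
  "outcome U E mu S W eps i t \<omega> = mu i t (S i t \<omega>) (wN U E W i t \<omega>) + eps i t \<omega>"

definition ht_est :: "'w measure \<Rightarrow> 'a set \<Rightarrow> ('a \<Rightarrow> 'a \<Rightarrow> bool) \<Rightarrow> real
     \<Rightarrow> ('a \<Rightarrow> nat \<Rightarrow> 's \<Rightarrow> ('a \<Rightarrow> bool) \<Rightarrow> real) \<Rightarrow> ('a \<Rightarrow> nat \<Rightarrow> 'w \<Rightarrow> 's)
     \<Rightarrow> ('a \<Rightarrow> nat \<Rightarrow> 'w \<Rightarrow> bool) \<Rightarrow> ('a \<Rightarrow> nat \<Rightarrow> 'w \<Rightarrow> real)
     \<Rightarrow> nat \<Rightarrow> 'a \<Rightarrow> nat \<Rightarrow> 'w \<Rightarrow> real" where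
  "ht_est M U E \<delta> mu S W eps r i t \<omega> =
     expo U E \<delta> W r i t True \<omega> / pexpo M U E \<delta> W r i t True * outcome U E mu S W eps i t \<omega>
   - expo U E \<delta> W r i t False \<omega> / pexpo M U E \<delta> W r i t False * outcome U E mu S W eps i t \<omega>"

definition covar :: "'w measure \<Rightarrow> ('w \<Rightarrow> real) \<Rightarrow> ('w \<Rightarrow> real) \<Rightarrow> real" where
  "covar M X Y = (\<integral>\<omega>. X \<omega> * Y \<omega> \<partial>M) - (\<integral>\<omega>. X \<omega> \<partial>M) * (\<integral>\<omega>. Y \<omega> \<partial>M)"

end

theory Submission
  imports Defs
begin

(* Since exposure to treatment and to control are equally likely under the design, the
   estimator is ((X1 - X0) / p) Y with 0/1-valued exposures X1, X0 of mean p.  With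
   c = ((X1 - X0) / p)^2 we get Delta^2 <= 2 c (1 + eps^2), where E c <= 2 / p, and since c
   is a function of the treatments, conditioning on treatments and states bounds
   E[c eps^2] by sigma^2 E c.  Hence E[Delta^2] <= 4 (1 + sigma^2) / p, and
   Cov(X, Y) <= (E X^2 + E Y^2) / 2 together with 1/p + 1/p' <= 2 / (p p') gives the claim. *)

lemma abs_mult_le_sum_squares: "\<bar>x * y\<bar> \<le> x\<^sup>2 + (y::real)\<^sup>2"
proof -
  have "2 * \<bar>x * y\<bar> \<le> x\<^sup>2 + y\<^sup>2"
    using sum_squares_bound[of "\<bar>x\<bar>" "\<bar>y\<bar>"] by (simp add: abs_mult mult.assoc)
  then show ?thesis using abs_ge_zero[of "x * y"] by linarith
qed

lemma (in prob_space) covar_le_second_moments: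
  fixes X Y :: "'a \<Rightarrow> real"
  assumes [measurable]: "X \<in> borel_measurable M" "Y \<in> borel_measurable M"
    and sqX: "integrable M (\<lambda>x. (X x)\<^sup>2)" and sqY: "integrable M (\<lambda>x. (Y x)\<^sup>2)"
  shows "covar M X Y \<le> (expectation (\<lambda>x. (X x)\<^sup>2) + expectation (\<lambda>x. (Y x)\<^sup>2)) / 2"
proof -
  have iX: "integrable M X" and iY: "integrable M Y"
    using sqX sqY by (auto intro: square_integrable_imp_integrable)
  have iXY: "integrable M (\<lambda>x. X x * Y x)"
    by (rule Bochner_Integration.integrable_bound[OF Bochner_Integration.integrable_add[OF sqX sqY]])
       (auto intro: order_trans[OF abs_mult_le_sum_squares])
  have "0 \<le> variance (\<lambda>x. X x - Y x)"
    by (rule variance_positive)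
  also have "\<dots> = expectation (\<lambda>x. (X x)\<^sup>2) - 2 * expectation (\<lambda>x. X x * Y x)
      + expectation (\<lambda>x. (Y x)\<^sup>2) - (expectation X - expectation Y)\<^sup>2"
    using iX iY iXY sqX sqY by (subst variance_eq) (auto simp: power2_diff mult.assoc)
  finally have "2 * covar M X Y \<le> expectation (\<lambda>x. (X x)\<^sup>2) + expectation (\<lambda>x. (Y x)\<^sup>2)
      - (expectation X)\<^sup>2 - (expectation Y)\<^sup>2"
    by (simp add: covar_def power2_diff algebra_simps)
  then have "2 * covar M X Y \<le> expectation (\<lambda>x. (X x)\<^sup>2) + expectation (\<lambda>x. (Y x)\<^sup>2)"
    using zero_le_power2[of "expectation X"] zero_le_power2[of "expectation Y"] by linarith
  then show ?thesis
    by simp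
qed

lemma (in prob_space) integral_mult_le_of_square_le:
  fixes X Y g h :: "'a \<Rightarrow> real"
  assumes g: "integrable M g" and h: "integrable M h"
    and X_le: "\<And>x. x \<in> space M \<Longrightarrow> (X x)\<^sup>2 \<le> g x"
    and Y_le: "\<And>x. x \<in> space M \<Longrightarrow> (Y x)\<^sup>2 \<le> h x"
  shows "expectation (\<lambda>x. X x * Y x) \<le> (expectation g + expectation h) / 2"
proof -
  have "expectation (\<lambda>x. X x * Y x) \<le> expectation (\<lambda>x. (g x + h x) / 2)"
  proof (cases "integrable M (\<lambda>x. X x * Y x)")
    case True
    show ?thesis
    proof (rule integral_mono[OF True])
      fix x assume x: "x \<in> space M"
      show "X x * Y x \<le> (g x + h x) / 2"
        using sum_squares_bound[of "X x" "Y x"] X_le[OF x] Y_le[OF x] by simp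
    qed (use g h in simp)
  next
    case False
    have "0 \<le> g x" "0 \<le> h x" if "x \<in> space M" for x
      using X_le[OF that] Y_le[OF that] zero_le_power2 order_trans by blast+
    then show ?thesis
      using False by (simp add: not_integrable_integral_eq integral_nonneg)
  qed
  also have "\<dots> = (expectation g + expectation h) / 2"
    using g h by simp
  finally show ?thesis .
qed

lemma (in prob_space) covar_le_of_square_le:
  fixes X Y g h :: "'a \<Rightarrow> real"
  assumes g: "integrable M g" and h: "integrable M h"
    and X_le: "\<And>x. x \<in> space M \<Longrightarrow> (X x)\<^sup>2 \<le> g x"
    and Y_le: "\<And>x. x \<in> space M \<Longrightarrow> (Y x)\<^sup>2 \<le> h x"
  shows "covar M X Y \<le> (expectation g + expectation h) / 2"
proof (cases "X \<in> borel_measurable M \<and> Y \<in> borel_measurable M")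
  case True
  then have [measurable]: "X \<in> borel_measurable M" "Y \<in> borel_measurable M" by auto
  have sqX: "integrable M (\<lambda>x. (X x)\<^sup>2)"
    by (rule Bochner_Integration.integrable_bound[OF g]) (auto intro: order_trans[OF X_le abs_ge_self])
  have sqY: "integrable M (\<lambda>x. (Y x)\<^sup>2)"
    by (rule Bochner_Integration.integrable_bound[OF h]) (auto intro: order_trans[OF Y_le abs_ge_self])
  have "expectation (\<lambda>x. (X x)\<^sup>2) \<le> expectation g"
    using sqX g X_le by (intro integral_mono) auto
  moreover have "expectation (\<lambda>x. (Y x)\<^sup>2) \<le> expectation h"
    using sqY h Y_le by (intro integral_mono) auto
  ultimately show ?thesis
    using covar_le_second_moments[OF _ _ sqX sqY] by simp
next
  (* The estimator need not be measurable, as mu is not assumed to be; a non-measurable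
     variable has junk mean 0, so the covariance is just the integral of the product. *)
  case False
  then have "expectation X = 0 \<or> expectation Y = 0"
    by (auto intro: not_integrable_integral_eq dest: borel_measurable_integrable)
  then have "covar M X Y = expectation (\<lambda>x. X x * Y x)"
    by (auto simp: covar_def)
  also have "\<dots> \<le> (expectation g + expectation h) / 2"
    using g h X_le Y_le by (rule integral_mult_le_of_square_le)
  finally show ?thesis .
qed

lemma (in sigma_finite_subalgebra) integral_mult_le_of_real_cond_exp_le:
  fixes c e :: "'a \<Rightarrow> real"
  assumes c: "c \<in> borel_measurable F" "integrable M c"
    and c_nonneg: "\<And>x. x \<in> space M \<Longrightarrow> 0 \<le> c x" and c_le: "\<And>x. x \<in> space M \<Longrightarrow> c x \<le> B"
    and e: "integrable M e" and cond_exp_le: "AE x in M. real_cond_exp M F e x \<le> s"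
  shows "integrable M (\<lambda>x. c x * e x)" and "(\<integral>x. c x * e x \<partial>M) \<le> s * integral\<^sup>L M c"
proof -
  have [measurable]: "c \<in> borel_measurable M"
    by (rule measurable_from_subalg[OF subalg c(1)])
  show ce: "integrable M (\<lambda>x. c x * e x)"
  proof (rule Bochner_Integration.integrable_bound[OF integrable_mult_right[OF integrable_abs[OF e], of B]])
    show "AE x in M. norm (c x * e x) \<le> norm (B * \<bar>e x\<bar>)"
    proof (intro AE_I2)
      fix x assume "x \<in> space M"
      then have "\<bar>c x\<bar> * \<bar>e x\<bar> \<le> \<bar>B\<bar> * \<bar>e x\<bar>"
        using c_nonneg c_le by (intro mult_right_mono) (auto intro: order_trans[OF _ abs_ge_self])
      then show "norm (c x * e x) \<le> norm (B * \<bar>e x\<bar>)"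
        by (simp add: abs_mult)
    qed
  qed (use e in simp)
  have "(\<integral>x. c x * e x \<partial>M) = (\<integral>x. c x * real_cond_exp M F e x \<partial>M)"
    using real_cond_exp_intg(2)[OF ce c(1)] e by simp
  also have "\<dots> \<le> (\<integral>x. c x * s \<partial>M)"
  proof (rule integral_mono_AE)
    show "integrable M (\<lambda>x. c x * real_cond_exp M F e x)"
      using real_cond_exp_intg(1)[OF ce c(1)] e by simp
    show "AE x in M. c x * real_cond_exp M F e x \<le> c x * s"
      using cond_exp_le AE_space by eventually_elim (auto intro: mult_left_mono c_nonneg)
  qed (use c in simp)
  finally show "(\<integral>x. c x * e x \<partial>M) \<le> s * integral\<^sup>L M c"
    by (simp add: mult.commute)
qed

lemma (in prob_space) prob_Collect_not_eq_half:
  assumes "{\<omega> \<in> space M. P \<omega>} \<in> events" "prob {\<omega> \<in> space M. P \<omega>} = 1/2"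
  shows "prob {\<omega> \<in> space M. \<not> P \<omega>} = 1/2"
proof -
  have "prob {\<omega> \<in> space M. \<not> P \<omega>} = prob (space M - {\<omega> \<in> space M. P \<omega>})"
    by (rule arg_cong[where f = prob]) auto
  also have "\<dots> = 1/2"
    using prob_compl[OF assms(1)] assms(2) by simp
  finally show ?thesis .
qed

lemma (in prob_space) prob_fair_coins_eq_card:
  fixes Z :: "'k \<Rightarrow> 'a \<Rightarrow> bool"
  assumes indep: "indep_vars (\<lambda>_. count_space UNIV) Z K" and K: "finite K"
    and fair: "\<And>k. k \<in> K \<Longrightarrow> prob {\<omega> \<in> space M. Z k \<omega>} = 1/2"
  shows "prob {\<omega> \<in> space M. H (\<lambda>k\<in>K. Z k \<omega>)} = card {x \<in> K \<rightarrow>\<^sub>E UNIV. H x} / 2 ^ card K"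
proof -
  have Z_meas: "Z k \<in> measurable M (count_space UNIV)" if "k \<in> K" for k
    using indep that unfolding indep_vars_def by blast
  have Z_event: "{\<omega> \<in> space M. Z k \<omega> = b} \<in> events" if "k \<in> K" for k b
    using Z_meas[OF that] by measurable
  have Z_fair: "prob {\<omega> \<in> space M. Z k \<omega> = b} = 1/2" if "k \<in> K" for k b
    using fair[OF that] prob_Collect_not_eq_half[OF Z_event[OF that, of True]] by (cases b) simp_all
  define outcome where "outcome x = {\<omega> \<in> space M. (\<lambda>k\<in>K. Z k \<omega>) = x}" for x
  have outcome_eq: "outcome x = space M \<inter> (\<Inter>k\<in>K. {\<omega> \<in> space M. Z k \<omega> = x k})"
    if "x \<in> K \<rightarrow>\<^sub>E UNIV" for x
    using that by (auto simp: outcome_def PiE_iff extensional_def fun_eq_iff)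
  have outcome_event: "outcome x \<in> events" if "x \<in> K \<rightarrow>\<^sub>E UNIV" for x
    unfolding outcome_eq[OF that] using K Z_event by auto
  have prob_outcome: "prob (outcome x) = 1 / 2 ^ card K" if x: "x \<in> K \<rightarrow>\<^sub>E UNIV" for x
  proof (cases "K = {}")
    case False
    have "indep_events (\<lambda>k. {\<omega> \<in> space M. Z k \<omega> = x k}) K"
      using indep by (rule indep_eventsI_indep_vars) simp
    then have "prob (\<Inter>k\<in>K. {\<omega> \<in> space M. Z k \<omega> = x k}) = (\<Prod>k\<in>K. prob {\<omega> \<in> space M. Z k \<omega> = x k})"
      using K False unfolding indep_events_def by blast
    moreover have "outcome x = (\<Inter>k\<in>K. {\<omega> \<in> space M. Z k \<omega> = x k})"
      using False by (auto simp: outcome_eq[OF x])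
    ultimately show ?thesis
      using Z_fair by (simp add: power_one_over)
  qed (simp add: outcome_eq[OF x] prob_space)
  have finite_outcomes: "finite {x \<in> K \<rightarrow>\<^sub>E UNIV. H x}"
    by (rule finite_subset[of _ "K \<rightarrow>\<^sub>E UNIV"]) (auto intro: finite_PiE K)
  have "{\<omega> \<in> space M. H (\<lambda>k\<in>K. Z k \<omega>)} = (\<Union>x\<in>{x \<in> K \<rightarrow>\<^sub>E UNIV. H x}. outcome x)"
    by (auto simp: outcome_def)
  then have "prob {\<omega> \<in> space M. H (\<lambda>k\<in>K. Z k \<omega>)} = (\<Sum>x\<in>{x \<in> K \<rightarrow>\<^sub>E UNIV. H x}. prob (outcome x))"
    using finite_outcomes outcome_event
    by (auto intro!: finite_measure_finite_Union simp: disjoint_family_on_def outcome_def)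
  also have "\<dots> = card {x \<in> K \<rightarrow>\<^sub>E UNIV. H x} / 2 ^ card K"
    using prob_outcome by simp
  finally show ?thesis .
qed

lemma (in prob_space) prob_flip_fair_coins:
  fixes Z :: "'k \<Rightarrow> 'a \<Rightarrow> bool"
  assumes indep: "indep_vars (\<lambda>_. count_space UNIV) Z K" and K: "finite K"
    and fair: "\<And>k. k \<in> K \<Longrightarrow> prob {\<omega> \<in> space M. Z k \<omega>} = 1/2"
  shows "prob {\<omega> \<in> space M. H (\<lambda>k\<in>K. \<not> Z k \<omega>)} = prob {\<omega> \<in> space M. H (\<lambda>k\<in>K. Z k \<omega>)}"
proof -
  have indep_flip: "indep_vars (\<lambda>_. count_space UNIV) (\<lambda>k \<omega>. \<not> Z k \<omega>) K"
    using indep by (rule indep_vars_compose2) simp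
  have "prob {\<omega> \<in> space M. \<not> Z k \<omega>} = 1/2" if "k \<in> K" for k
  proof (rule prob_Collect_not_eq_half[OF _ fair[OF that]])
    have "Z k \<in> measurable M (count_space UNIV)"
      using indep that unfolding indep_vars_def by blast
    then show "{\<omega> \<in> space M. Z k \<omega>} \<in> events"
      by measurable
  qed
  then show ?thesis
    using prob_fair_coins_eq_card[OF indep_flip K] prob_fair_coins_eq_card[OF indep K fair] by simp
qed

lemma space_gen_sigma [simp]: "space (gen_sigma M N X K) = space M"
  unfolding gen_sigma_def by (simp add: space_measure_of_conv)

lemma sets_gen_sigma:
  "sets (gen_sigma M N X K) = sigma_sets (space M) {X k -` B \<inter> space M | k B. k \<in> K \<and> B \<in> sets N}"
  unfolding gen_sigma_def by (rule sets_measure_of) auto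

lemma sets_gen_sigma_subset:
  assumes "\<And>k. k \<in> K \<Longrightarrow> X k \<in> measurable M N"
  shows "sets (gen_sigma M N X K) \<subseteq> sets M"
  unfolding sets_gen_sigma by (rule sets.sigma_sets_subset) (use assms measurable_sets in blast)

lemma subalgebra_sigma_Un:
  assumes "sets G \<subseteq> sets M" "sets H \<subseteq> sets M"
  shows "subalgebra M (sigma (space M) (sets G \<union> sets H))"
proof -
  have "sets G \<union> sets H \<subseteq> Pow (space M)"
    using assms sets.sets_into_space by blast
  then show ?thesis
    unfolding subalgebra_def using assms
    by (simp add: space_measure_of_conv sets.sigma_sets_subset)
qed

lemma measurable_sigma_Un_gen_sigma:
  assumes "k \<in> K" "X k \<in> space M \<rightarrow> space N" "sets H \<subseteq> Pow (space M)"
  shows "X k \<in> measurable (sigma (space M) (sets (gen_sigma M N X K) \<union> sets H)) N"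
proof -
  have "sets (gen_sigma M N X K) \<subseteq> Pow (space M)"
    using sets.sets_into_space[of _ "gen_sigma M N X K"] by auto
  then have sets_eq: "sets (sigma (space M) (sets (gen_sigma M N X K) \<union> sets H))
      = sigma_sets (space M) (sets (gen_sigma M N X K) \<union> sets H)"
    using assms(3) by (intro sets_measure_of) blast
  show ?thesis
  proof (rule measurableI)
    fix B assume "B \<in> sets N"
    then have "X k -` B \<inter> space M \<in> sets (gen_sigma M N X K)"
      unfolding sets_gen_sigma using assms(1) by (intro sigma_sets.Basic) blast
    then show "X k -` B \<inter> space (sigma (space M) (sets (gen_sigma M N X K) \<union> sets H))
        \<in> sets (sigma (space M) (sets (gen_sigma M N X K) \<union> sets H))"
      unfolding sets_eq by (simp add: space_measure_of_conv)
  qed (use assms(2) in \<open>auto simp: space_measure_of_conv\<close>)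
qed

lemma prod_of_bool:
  "finite A \<Longrightarrow> (\<Prod>x\<in>A. of_bool (P x) :: 'b::comm_semiring_1) = of_bool (\<forall>x\<in>A. P x)"
  by (induction A rule: finite_induct) auto

lemma borel_measurable_card_filter:
  assumes "finite A" "\<And>j. j \<in> A \<Longrightarrow> Measurable.pred F (P j)"
  shows "(\<lambda>\<omega>. real (card {j \<in> A. P j \<omega>})) \<in> borel_measurable F"
proof -
  have "real (card {j \<in> A. P j \<omega>}) = (\<Sum>j\<in>A. of_bool (P j \<omega>))" for \<omega>
    using assms(1) by (simp add: Collect_conj_eq Int_commute)
  moreover have "(\<lambda>\<omega>. \<Sum>j\<in>A. of_bool (P j \<omega>) :: real) \<in> borel_measurable F"
    using assms(2) by measurable
  ultimately show ?thesis
    by simp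
qed

abbreviation exposure_window :: "nat \<Rightarrow> nat \<Rightarrow> nat set" where
  "exposure_window r t \<equiv> {t - r..t} \<inter> {1..}"

lemma expo_eq_of_bool:
  "expo U E \<delta> W r i t a \<omega> = of_bool (\<forall>s\<in>exposure_window r t.
      1 - \<delta> \<le> real (card {j \<in> nbhd U E i. W j s \<omega> = a}) / real (card (nbhd U E i)))"
  unfolding expo_def by (rule prod_of_bool) simp

lemma expo_measurable:
  assumes "finite U"
    and W: "\<And>j s. j \<in> nbhd U E i \<Longrightarrow> s \<in> exposure_window r t \<Longrightarrow> W j s \<in> measurable F (count_space UNIV)"
  shows "expo U E \<delta> W r i t a \<in> borel_measurable F"
proof -
  have "finite (nbhd U E i)"
    using assms(1) by (simp add: nbhd_def)
  then have [measurable]: "(\<lambda>\<omega>. real (card {j \<in> nbhd U E i. W j s \<omega> = a})) \<in> borel_measurable F"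
    if "s \<in> exposure_window r t" for s
    using W[OF _ that] by (intro borel_measurable_card_filter) measurable
  show ?thesis
    unfolding expo_def by measurable
qed

lemma expo_cases: "expo U E \<delta> W r i t a \<omega> = 0 \<or> expo U E \<delta> W r i t a \<omega> = 1"
  unfolding expo_eq_of_bool of_bool_def by simp

lemma integral_expo:
  assumes "expo U E \<delta> W r i t a \<in> borel_measurable M"
  shows "integral\<^sup>L M (expo U E \<delta> W r i t a) = pexpo M U E \<delta> W r i t a"
proof -
  have "integral\<^sup>L M (expo U E \<delta> W r i t a)
      = integral\<^sup>L M (indicator {\<omega> \<in> space M. expo U E \<delta> W r i t a \<omega> = 1})"
    using expo_cases[of U E \<delta> W r i t a] by (intro Bochner_Integration.integral_cong) (auto simp: indicator_def)
  then show ?thesis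
    by (simp add: pexpo_def Int_absorb2)
qed

lemma (in finite_measure) integrable_expo:
  assumes "expo U E \<delta> W r i t a \<in> borel_measurable M"
  shows "integrable M (expo U E \<delta> W r i t a)"
proof (rule integrable_const_bound[where B = 1])
  show "AE \<omega> in M. norm (expo U E \<delta> W r i t a \<omega>) \<le> 1"
    using expo_cases[of U E \<delta> W r i t a] by (intro AE_I2) (metis norm_one norm_zero order_refl zero_le_one)
qed (rule assms)

lemma expo_eq_function_of_coins:
  assumes U: "finite U" and Cl: "partition_on U Cl"
    and W_eq: "\<forall>C\<in>Cl. \<forall>j\<in>C. \<forall>s\<in>{1..T}. \<forall>\<omega>\<in>\<Omega>. W j s \<omega> = Z (C, block_of l s) \<omega>"
    and i: "i \<in> U" and t: "t \<in> {1..T}"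
  shows "\<exists>G. \<forall>a. \<forall>\<omega>\<in>\<Omega>.
    expo U E \<delta> W r i t a \<omega> = of_bool (G (\<lambda>k\<in>Cl \<times> block_of l ` {1..T}. Z k \<omega> = a))"
proof -
  define K where "K = Cl \<times> block_of l ` {1..T}"
  define N where "N = nbhd U E i"
  have "\<forall>j\<in>U. \<exists>C. C \<in> Cl \<and> j \<in> C"
    using Cl unfolding partition_on_def by blast
  then obtain cl where cl: "\<forall>j\<in>U. cl j \<in> Cl \<and> j \<in> cl j"
    by (rule bchoice[THEN exE])
  have N: "N \<subseteq> U"
    unfolding N_def nbhd_def using i by auto
  have window: "exposure_window r t \<subseteq> {1..T}"
    using t by auto
  define G where "G x \<longleftrightarrow> (\<forall>s\<in>exposure_window r t.
      1 - \<delta> \<le> real (card {j \<in> N. x (cl j, block_of l s)}) / real (card N))" for x :: "_ \<Rightarrow> bool"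
  have coin_eq: "(\<lambda>k\<in>K. Z k \<omega> = a) (cl j, block_of l s) \<longleftrightarrow> W j s \<omega> = a"
    if "\<omega> \<in> \<Omega>" "j \<in> N" "s \<in> exposure_window r t" for \<omega> a j s
  proof -
    have "j \<in> U" "s \<in> {1..T}"
      using that N window by auto
    then have "(cl j, block_of l s) \<in> K" and "W j s \<omega> = Z (cl j, block_of l s) \<omega>"
      using cl W_eq \<open>\<omega> \<in> \<Omega>\<close> unfolding K_def by blast+
    then show ?thesis
      by simp
  qed
  have "expo U E \<delta> W r i t a \<omega> = of_bool (G (\<lambda>k\<in>K. Z k \<omega> = a))" if "\<omega> \<in> \<Omega>" for \<omega> a
  proof -
    have "{j \<in> N. (\<lambda>k\<in>K. Z k \<omega> = a) (cl j, block_of l s)} = {j \<in> N. W j s \<omega> = a}"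
      if "s \<in> exposure_window r t" for s
      using coin_eq[OF \<open>\<omega> \<in> \<Omega>\<close> _ that] by blast
    then show ?thesis
      unfolding expo_eq_of_bool G_def N_def[symmetric] by simp
  qed
  then show ?thesis
    unfolding K_def by blast
qed

(* Exposure to control is exposure to treatment for the flipped coins, which are again
   independent and fair. *)
lemma pexpo_False_eq_True:
  assumes M: "prob_space M" and U: "finite U" and Cl: "partition_on U Cl"
    and design: "clustered_switchback M U Cl T l W"
    and i: "i \<in> U" and t: "t \<in> {1..T}"
  shows "pexpo M U E \<delta> W r i t False = pexpo M U E \<delta> W r i t True"
proof -
  interpret prob_space M by (rule M)
  define K where "K = Cl \<times> block_of l ` {1..T}"
  obtain A where indep: "indep_vars (\<lambda>_. count_space UNIV) (\<lambda>(C, b). A C b) K"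
    and fair: "\<forall>C\<in>Cl. \<forall>b\<in>block_of l ` {1..T}. prob {\<omega> \<in> space M. A C b \<omega>} = 1/2"
    and W_eq: "\<forall>C\<in>Cl. \<forall>j\<in>C. \<forall>s\<in>{1..T}. \<forall>\<omega>\<in>space M. W j s \<omega> = A C (block_of l s) \<omega>"
    using design unfolding clustered_switchback_def K_def by blast
  define Z where "Z = (\<lambda>(C, b). A C b)"
  have "\<forall>C\<in>Cl. \<forall>j\<in>C. \<forall>s\<in>{1..T}. \<forall>\<omega>\<in>space M. W j s \<omega> = Z (C, block_of l s) \<omega>"
    using W_eq by (simp add: Z_def)
  from expo_eq_function_of_coins[OF U Cl this i t]
  obtain G where G: "\<And>a \<omega>. \<omega> \<in> space M \<Longrightarrow> expo U E \<delta> W r i t a \<omega> = of_bool (G (\<lambda>k\<in>K. Z k \<omega> = a))"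
    unfolding K_def by blast
  have pexpo_eq: "pexpo M U E \<delta> W r i t a = prob {\<omega> \<in> space M. G (\<lambda>k\<in>K. Z k \<omega> = a)}" for a
    unfolding pexpo_def by (intro arg_cong[where f = prob] Collect_cong conj_cong refl) (simp add: G)
  have "finite K"
    unfolding K_def using U Cl finite_UnionD by (auto simp: partition_on_def)
  then have "prob {\<omega> \<in> space M. G (\<lambda>k\<in>K. \<not> Z k \<omega>)} = prob {\<omega> \<in> space M. G (\<lambda>k\<in>K. Z k \<omega>)}"
    using indep fair unfolding Z_def by (intro prob_flip_fair_coins) (auto simp: K_def)
  then show ?thesis
    by (simp add: pexpo_eq)
qed

lemma ht_est_eq:
  assumes "pexpo M U E \<delta> W r i t False = pexpo M U E \<delta> W r i t True"
  shows "ht_est M U E \<delta> mu S W eps r i t \<omega>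
    = (expo U E \<delta> W r i t True \<omega> - expo U E \<delta> W r i t False \<omega>) / pexpo M U E \<delta> W r i t True
      * outcome U E mu S W eps i t \<omega>"
  unfolding ht_est_def assms by (simp add: diff_divide_distrib left_diff_distrib)

lemma ht_est_eq_zero:
  assumes "pexpo M U E \<delta> W r i t False = pexpo M U E \<delta> W r i t True"
    and "pexpo M U E \<delta> W r i t True = 0"
  shows "ht_est M U E \<delta> mu S W eps r i t = (\<lambda>_. 0)"
  by (simp add: fun_eq_iff ht_est_eq[OF assms(1)] assms(2))

lemma square_add_le_of_unit_interval:
  fixes m e :: real
  assumes "0 \<le> m" "m \<le> 1"
  shows "(m + e)\<^sup>2 \<le> 2 * (1 + e\<^sup>2)"
proof -
  have "(m + e)\<^sup>2 \<le> 2 * m\<^sup>2 + 2 * e\<^sup>2"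
    using sum_squares_bound[of m e] by (simp add: power2_sum)
  moreover have "m\<^sup>2 \<le> 1"
    using assms by (simp add: power_le_one)
  ultimately show ?thesis
    by simp
qed

lemma square_expo_diff_le:
  "((expo U E \<delta> W r i t True \<omega> - expo U E \<delta> W r i t False \<omega>) / p)\<^sup>2 \<le> 1 / p\<^sup>2"
  using expo_cases[of U E \<delta> W r i t True \<omega>] expo_cases[of U E \<delta> W r i t False \<omega>]
  by (auto simp: power_divide)

lemma integral_square_expo_diff_le:
  assumes M: "prob_space M"
    and meas [measurable]: "\<And>a. expo U E \<delta> W r i t a \<in> borel_measurable M"
    and sym: "pexpo M U E \<delta> W r i t False = pexpo M U E \<delta> W r i t True"
    and p_pos: "0 < pexpo M U E \<delta> W r i t True"
  defines "c \<equiv> \<lambda>\<omega>. ((expo U E \<delta> W r i t True \<omega> - expo U E \<delta> W r i t False \<omega>)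
      / pexpo M U E \<delta> W r i t True)\<^sup>2"
  shows "integrable M c" and "integral\<^sup>L M c \<le> 2 / pexpo M U E \<delta> W r i t True"
proof -
  interpret prob_space M by (rule M)
  define p where "p = pexpo M U E \<delta> W r i t True"
  define X where "X = expo U E \<delta> W r i t"
  have [measurable]: "X a \<in> borel_measurable M" and X_int: "integrable M (X a)" for a
    unfolding X_def using meas by (auto intro: integrable_expo)
  show c_int: "integrable M c"
    unfolding c_def
    by (rule integrable_const_bound[where B = "1 / (pexpo M U E \<delta> W r i t True)\<^sup>2"])
       (auto simp: square_expo_diff_le)
  have "((X True \<omega> - X False \<omega>) / p)\<^sup>2 \<le> (X True \<omega> + X False \<omega>) / p\<^sup>2" for \<omega>
    using expo_cases[of U E \<delta> W r i t True \<omega>] expo_cases[of U E \<delta> W r i t False \<omega>]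
    by (auto simp: X_def power_divide)
  then have "integral\<^sup>L M c \<le> (\<integral>\<omega>. (X True \<omega> + X False \<omega>) / p\<^sup>2 \<partial>M)"
    using X_int c_int unfolding c_def X_def p_def by (intro integral_mono) auto
  also have "\<dots> = 2 / p"
    using X_int p_pos integral_expo[OF meas] sym
    by (simp add: X_def p_def power2_eq_square field_simps)
  finally show "integral\<^sup>L M c \<le> 2 / pexpo M U E \<delta> W r i t True"
    unfolding p_def .
qed

lemma square_ht_est_le:
  assumes sym: "pexpo M U E \<delta> W r i t False = pexpo M U E \<delta> W r i t True"
    and mu_range: "\<And>x w. 0 \<le> mu i t x w \<and> mu i t x w \<le> 1"
  shows "(ht_est M U E \<delta> mu S W eps r i t \<omega>)\<^sup>2
    \<le> 2 * ((expo U E \<delta> W r i t True \<omega> - expo U E \<delta> W r i t False \<omega>) / pexpo M U E \<delta> W r i t True)\<^sup>2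
      * (1 + (eps i t \<omega>)\<^sup>2)"
proof -
  define c where "c = ((expo U E \<delta> W r i t True \<omega> - expo U E \<delta> W r i t False \<omega>) / pexpo M U E \<delta> W r i t True)\<^sup>2"
  define m where "m = mu i t (S i t \<omega>) (wN U E W i t \<omega>)"
  have "(ht_est M U E \<delta> mu S W eps r i t \<omega>)\<^sup>2 = c * (m + eps i t \<omega>)\<^sup>2"
    unfolding ht_est_eq[OF sym] c_def outcome_def m_def by (simp add: power_divide power_mult_distrib)
  also have "\<dots> \<le> c * (2 * (1 + (eps i t \<omega>)\<^sup>2))"
    using square_add_le_of_unit_interval mu_range by (intro mult_left_mono) (auto simp: m_def c_def)
  finally show ?thesis
    by (simp add: c_def algebra_simps)
qed

lemma ht_est_square_dominated:
  fixes M :: "'w measure"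
  assumes M: "prob_space M" and F: "subalgebra M F" and U: "finite U"
    and W_F: "\<And>j s. j \<in> U \<Longrightarrow> s \<in> {1..T} \<Longrightarrow> W j s \<in> measurable F (count_space UNIV)"
    and i: "i \<in> U" and t: "t \<in> {1..T}"
    and sym: "pexpo M U E \<delta> W r i t False = pexpo M U E \<delta> W r i t True"
    and p_pos: "0 < pexpo M U E \<delta> W r i t True"
    and mu_range: "\<And>x w. 0 \<le> mu i t x w \<and> mu i t x w \<le> 1"
    and eps_sq: "integrable M (\<lambda>\<omega>. eps i t \<omega> * eps i t \<omega>)"
    and cond_eps_sq: "AE \<omega> in M. real_cond_exp M F (\<lambda>\<omega>. eps i t \<omega> * eps i t \<omega>) \<omega> \<le> \<sigma>\<^sup>2"
  shows "\<exists>g. integrable M g \<and> integral\<^sup>L M g \<le> 4 * (1 + \<sigma>\<^sup>2) / pexpo M U E \<delta> W r i t True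
    \<and> (\<forall>\<omega>\<in>space M. (ht_est M U E \<delta> mu S W eps r i t \<omega>)\<^sup>2 \<le> g \<omega>)"
proof -
  interpret prob_space M by (rule M)
  interpret finite_measure_subalgebra M F
    by unfold_locales (rule F)
  define p where "p = pexpo M U E \<delta> W r i t True"
  define c where "c = (\<lambda>\<omega>. ((expo U E \<delta> W r i t True \<omega> - expo U E \<delta> W r i t False \<omega>) / p)\<^sup>2)"
  define e2 where "e2 = (\<lambda>\<omega>. eps i t \<omega> * eps i t \<omega>)"
  have "nbhd U E i \<subseteq> U" "exposure_window r t \<subseteq> {1..T}"
    using i t by (auto simp: nbhd_def)
  then have [measurable]: "expo U E \<delta> W r i t a \<in> borel_measurable F" for a
    using U W_F by (intro expo_measurable) auto
  then have "expo U E \<delta> W r i t a \<in> borel_measurable M" for a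
    by (rule measurable_from_subalg[OF F])
  then have c_int: "integrable M c" and c_le: "integral\<^sup>L M c \<le> 2 / p"
    using integral_square_expo_diff_le[OF M _ sym p_pos] unfolding c_def p_def by auto
  have "c \<in> borel_measurable F"
    unfolding c_def by measurable
  then have ce2_int: "integrable M (\<lambda>\<omega>. c \<omega> * e2 \<omega>)"
    and ce2_le: "(\<integral>\<omega>. c \<omega> * e2 \<omega> \<partial>M) \<le> \<sigma>\<^sup>2 * integral\<^sup>L M c"
    using integral_mult_le_of_real_cond_exp_le[OF _ c_int _ _ eps_sq cond_eps_sq, of "1 / p\<^sup>2"]
    by (auto simp: c_def e2_def square_expo_diff_le)
  define g where "g = (\<lambda>\<omega>. 2 * c \<omega> + 2 * (c \<omega> * e2 \<omega>))"
  have "integral\<^sup>L M g = 2 * integral\<^sup>L M c + 2 * (\<integral>\<omega>. c \<omega> * e2 \<omega> \<partial>M)"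
    using c_int ce2_int by (simp add: g_def)
  also have "\<dots> \<le> 2 * (1 + \<sigma>\<^sup>2) * integral\<^sup>L M c"
    using ce2_le by (simp add: algebra_simps)
  also have "\<dots> \<le> 2 * (1 + \<sigma>\<^sup>2) * (2 / p)"
    using c_le by (intro mult_left_mono) auto
  finally have "integral\<^sup>L M g \<le> 4 * (1 + \<sigma>\<^sup>2) / p"
    by simp
  moreover have "(ht_est M U E \<delta> mu S W eps r i t \<omega>)\<^sup>2 \<le> g \<omega>" for \<omega>
  proof -
    have "(ht_est M U E \<delta> mu S W eps r i t \<omega>)\<^sup>2 \<le> 2 * c \<omega> * (1 + (eps i t \<omega>)\<^sup>2)"
      using square_ht_est_le[where mu = mu and S = S and eps = eps and \<omega> = \<omega>, OF sym mu_range]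
      by (simp add: c_def p_def)
    also have "\<dots> = g \<omega>"
      by (simp add: g_def e2_def power2_eq_square algebra_simps)
    finally show ?thesis .
  qed
  ultimately show ?thesis
    using c_int ce2_int unfolding p_def by (intro exI[of _ g]) (auto simp: g_def)
qed

lemma average_div_le_div_mult:
  fixes p q K :: real
  assumes "0 < p" "p \<le> 1" "0 < q" "q \<le> 1" "0 \<le> K"
  shows "(K / p + K / q) / 2 \<le> K / (p * q)"
proof -
  have "K / p + K / q = K * (p + q) / (p * q)"
    using assms by (simp add: field_simps)
  also have "\<dots> \<le> K * 2 / (p * q)"
    using assms by (intro divide_right_mono mult_left_mono) auto
  finally show ?thesis
    by simp
qed

lemma covar_ht_est_le:
  fixes M :: "'w measure"
  assumes M: "prob_space M" and F: "subalgebra M F" and U: "finite U" and Cl: "partition_on U Cl"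
    and design: "clustered_switchback M U Cl T l W"
    and W_F: "\<And>j s. j \<in> U \<Longrightarrow> s \<in> {1..T} \<Longrightarrow> W j s \<in> measurable F (count_space UNIV)"
    and mu_range: "\<And>j s x w. 0 \<le> mu j s x w \<and> mu j s x w \<le> 1"
    and eps_sq: "\<And>j s. j \<in> U \<Longrightarrow> s \<in> {1..T} \<Longrightarrow> integrable M (\<lambda>\<omega>. eps j s \<omega> * eps j s \<omega>)"
    and cond_eps_sq: "\<And>j s. j \<in> U \<Longrightarrow> s \<in> {1..T} \<Longrightarrow>
      AE \<omega> in M. real_cond_exp M F (\<lambda>\<omega>. eps j s \<omega> * eps j s \<omega>) \<omega> \<le> \<sigma>\<^sup>2"
    and i: "i \<in> U" "i' \<in> U" and t: "t \<in> {1..T}" "t' \<in> {1..T}"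
  shows "covar M (ht_est M U E \<delta> mu S W eps r i t) (ht_est M U E \<delta> mu S W eps r i' t')
         \<le> 4 * (1 + \<sigma>\<^sup>2) / (pexpo M U E \<delta> W r i t True * pexpo M U E \<delta> W r i' t' True)"
proof -
  interpret prob_space M by (rule M)
  have sym: "pexpo M U E \<delta> W r j s False = pexpo M U E \<delta> W r j s True"
    if "j \<in> U" "s \<in> {1..T}" for j s
    using M U Cl design that by (rule pexpo_False_eq_True)
  have dominated: "\<exists>g. integrable M g \<and> integral\<^sup>L M g \<le> 4 * (1 + \<sigma>\<^sup>2) / pexpo M U E \<delta> W r j s True
      \<and> (\<forall>\<omega>\<in>space M. (ht_est M U E \<delta> mu S W eps r j s \<omega>)\<^sup>2 \<le> g \<omega>)"
    if "j \<in> U" "s \<in> {1..T}" "0 < pexpo M U E \<delta> W r j s True" for j s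
    using ht_est_square_dominated[where mu = mu and eps = eps, OF M F U W_F that(1,2) sym[OF that(1,2)]
        that(3) mu_range[of j s] eps_sq[OF that(1,2)] cond_eps_sq[OF that(1,2)]] .
  define p where "p = pexpo M U E \<delta> W r i t True"
  define p' where "p' = pexpo M U E \<delta> W r i' t' True"
  have p: "0 \<le> p" "p \<le> 1" "0 \<le> p'" "p' \<le> 1"
    unfolding p_def p'_def pexpo_def by auto
  show ?thesis
  proof (cases "p = 0 \<or> p' = 0")
    case True
    (* Then one of the estimators is 0, by the junk value of division by zero. *)
    then have "ht_est M U E \<delta> mu S W eps r i t = (\<lambda>_. 0) \<or> ht_est M U E \<delta> mu S W eps r i' t' = (\<lambda>_. 0)"
      using ht_est_eq_zero[OF sym[OF i(1) t(1)]] ht_est_eq_zero[OF sym[OF i(2) t(2)]]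
      unfolding p_def p'_def by blast
    then show ?thesis
      using True by (auto simp: covar_def p_def p'_def)
  next
    case False
    then have p_pos: "0 < p" "0 < p'"
      using p by auto
    obtain g g' where g: "integrable M g" "integral\<^sup>L M g \<le> 4 * (1 + \<sigma>\<^sup>2) / p"
        "\<forall>\<omega>\<in>space M. (ht_est M U E \<delta> mu S W eps r i t \<omega>)\<^sup>2 \<le> g \<omega>"
      and g': "integrable M g'" "integral\<^sup>L M g' \<le> 4 * (1 + \<sigma>\<^sup>2) / p'"
        "\<forall>\<omega>\<in>space M. (ht_est M U E \<delta> mu S W eps r i' t' \<omega>)\<^sup>2 \<le> g' \<omega>"
      using dominated[OF i(1) t(1)] dominated[OF i(2) t(2)] p_pos unfolding p_def p'_def by blast
    have "covar M (ht_est M U E \<delta> mu S W eps r i t) (ht_est M U E \<delta> mu S W eps r i' t')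
        \<le> (integral\<^sup>L M g + integral\<^sup>L M g') / 2"
      using g g' by (intro covar_le_of_square_le) auto
    also have "\<dots> \<le> (4 * (1 + \<sigma>\<^sup>2) / p + 4 * (1 + \<sigma>\<^sup>2) / p') / 2"
      using g(2) g'(2) by (intro divide_right_mono add_mono) auto
    also have "\<dots> \<le> 4 * (1 + \<sigma>\<^sup>2) / (p * p')"
      using p p_pos by (intro average_div_le_div_mult) auto
    finally show ?thesis
      unfolding p_def p'_def .
  qed
qed

theorem mainTheorem10:
  fixes M :: "'w measure"
    and U :: "'a set" and E :: "'a \<Rightarrow> 'a \<Rightarrow> bool"
    and Cl :: "'a set set" and T l r :: nat and \<delta> \<sigma> :: real
    and SS :: "'s measure"
    and W :: "'a \<Rightarrow> nat \<Rightarrow> 'w \<Rightarrow> bool"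
    and S :: "'a \<Rightarrow> nat \<Rightarrow> 'w \<Rightarrow> 's"
    and eps :: "'a \<Rightarrow> nat \<Rightarrow> 'w \<Rightarrow> real"
    and P :: "'a \<Rightarrow> nat \<Rightarrow> ('a \<Rightarrow> bool) \<Rightarrow> 's \<Rightarrow> 's measure"
    and mu :: "'a \<Rightarrow> nat \<Rightarrow> 's \<Rightarrow> ('a \<Rightarrow> bool) \<Rightarrow> real"
    and i i' :: 'a and t t' :: nat
  assumes M: "prob_space M"
    and U: "finite U"
    and E_sym: "\<And>x y. E x y \<longleftrightarrow> E y x"
    and Cl: "partition_on U Cl"
    and l: "l \<ge> 1"
    and \<delta>: "0 \<le> \<delta>" "\<delta> < 1"
    and W_meas: "\<And>j s. j \<in> U \<Longrightarrow> s \<in> {1..T} \<Longrightarrow> W j s \<in> measurable M (count_space UNIV)"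
    and S_meas: "\<And>j s. j \<in> U \<Longrightarrow> s \<in> {1..T} \<Longrightarrow> S j s \<in> measurable M SS"
    and eps_meas: "\<And>j s. j \<in> U \<Longrightarrow> s \<in> {1..T} \<Longrightarrow> eps j s \<in> borel_measurable M"
    and design: "clustered_switchback M U Cl T l W"
    and W_indep: "prob_space.indep_set M
          (sets (gen_sigma M (count_space UNIV) (\<lambda>(j, s). W j s) (U \<times> {1..T})))
          (sets (gen_sigma M SS (\<lambda>j. S j 1) U))"
    and P_kernel: "\<And>j s w x. prob_space (P j s w x) \<and> sets (P j s w x) = sets SS"
    and markov: "\<And>j s B. j \<in> U \<Longrightarrow> s \<in> {1..<T} \<Longrightarrow> B \<in> sets SS \<Longrightarrow>
          AE \<omega> in M. real_cond_exp M
              (sigma (space M)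
                 (sets (gen_sigma M (count_space UNIV) (\<lambda>(k, u). W k u) (U \<times> {1..T}))
                  \<union> sets (gen_sigma M SS (\<lambda>(k, u). S k u) (U \<times> {1..s}))))
              (indicator {\<omega>' \<in> space M. S j (Suc s) \<omega>' \<in> B}) \<omega>
            = measure (P j s (wN U E W j s \<omega>) (S j s \<omega>)) B"
    and mu_range: "\<And>j s x w. 0 \<le> mu j s x w \<and> mu j s x w \<le> 1"
    and noise_mean: "\<And>j s. j \<in> U \<Longrightarrow> s \<in> {1..T} \<Longrightarrow>
          integrable M (eps j s) \<and>
          (AE \<omega> in M. real_cond_exp M
              (sigma (space M)
                 (sets (gen_sigma M (count_space UNIV) (\<lambda>(k, u). W k u) (U \<times> {1..T}))
                  \<union> sets (gen_sigma M SS (\<lambda>(k, u). S k u) (U \<times> {1..T}))))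
              (eps j s) \<omega> = 0)"
    and noise_cov: "\<And>j s j' s'. j \<in> U \<Longrightarrow> s \<in> {1..T} \<Longrightarrow> j' \<in> U \<Longrightarrow> s' \<in> {1..T} \<Longrightarrow>
          integrable M (\<lambda>\<omega>. eps j s \<omega> * eps j' s' \<omega>) \<and>
          (AE \<omega> in M. real_cond_exp M
              (sigma (space M)
                 (sets (gen_sigma M (count_space UNIV) (\<lambda>(k, u). W k u) (U \<times> {1..T}))
                  \<union> sets (gen_sigma M SS (\<lambda>(k, u). S k u) (U \<times> {1..T}))))
              (\<lambda>\<omega>'. eps j s \<omega>' * eps j' s' \<omega>') \<omega> \<le> \<sigma>\<^sup>2 * of_bool (j = j' \<and> s = s'))"
    and i: "i \<in> U" "i' \<in> U"
    and t: "t \<in> {1..T}" "t' \<in> {1..T}"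
  shows "covar M (ht_est M U E \<delta> mu S W eps r i t) (ht_est M U E \<delta> mu S W eps r i' t')
         \<le> 4 * (1 + \<sigma>\<^sup>2) / (pexpo M U E \<delta> W r i t True * pexpo M U E \<delta> W r i' t' True)"
proof -
  define G where "G = gen_sigma M (count_space UNIV) (\<lambda>(k, u). W k u) (U \<times> {1..T})"
  define H where "H = gen_sigma M SS (\<lambda>(k, u). S k u) (U \<times> {1..T})"
  have G: "sets G \<subseteq> sets M" and H: "sets H \<subseteq> sets M"
    unfolding G_def H_def using W_meas S_meas by (auto intro!: sets_gen_sigma_subset)
  then have F: "subalgebra M (sigma (space M) (sets G \<union> sets H))"
    by (rule subalgebra_sigma_Un)
  have W_F: "W j s \<in> measurable (sigma (space M) (sets G \<union> sets H)) (count_space UNIV)"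
    if "j \<in> U" "s \<in> {1..T}" for j s
    using measurable_sigma_Un_gen_sigma[of "(j, s)" "U \<times> {1..T}" "\<lambda>(k, u). W k u" M "count_space UNIV" H]
      that H sets.sets_into_space unfolding G_def by auto
  have noise_sq: "integrable M (\<lambda>\<omega>. eps j s \<omega> * eps j s \<omega>)"
    "AE \<omega> in M. real_cond_exp M (sigma (space M) (sets G \<union> sets H)) (\<lambda>\<omega>. eps j s \<omega> * eps j s \<omega>) \<omega> \<le> \<sigma>\<^sup>2"
    if "j \<in> U" "s \<in> {1..T}" for j s
    using noise_cov[OF that that] unfolding G_def H_def by simp_all
  show ?thesis
    by (rule covar_ht_est_le[OF M F U Cl design W_F mu_range noise_sq i t])
qed

end
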